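(* Consider a cooperative multi-agent Markov decision process with $N$ agents, finite individual state space $\mathcal S$, finite individual action space $\mathcal A$, joint state space $\mathcal S^N$, joint action space $\mathcal A^N$, transition kernel $\mathbb P$, shared reward $\mathrm r$ and discount factor $\gamma\in(0,1)$, and suppose that for every $(\mathbf s_t,\mathbf a_t)\in\mathcal S^N\times\mathcal A^N$, every $\mathbf s_{t+1}\in\mathcal S^N$ and every permutation $\kappa$ of the agent indices, $$\mathrm r(\mathbf s_t,\mathbf a_t)=\mathrm r(\kappa(\mathbf s_t),\kappa(\mathbf a_t)),\qquad \mathbb P(\mathbf s_{t+1}\mid \mathbf s_t,\mathbf a_t)=\mathbb P(\kappa(\mathbf s_{t+1})\mid \kappa(\mathbf s_t),\kappa(\mathbf a_t)).$$ Then (i) there exists an optimal policy $\nu^*$ that is permutation invariant, i.e. $\nu^*(\mathbf s,\mathbf a)=\nu^*(\kappa(\mathbf s),\kappa(\mathbf a))$ for every permutation $\kappa$; and (ii) for every permutation invariant policy $\nu$, the value function and state-action value function are permutation invariant: $V^\nu(\mathbf s)=V^\nu(\kappa(\mathbf s))$ and $Q^\nu(\mathbf s,\mathbf a)=Q^\nu(\kappa(\mathbf s),\kappa(\mathbf a))$ for all $\mathbf s,\mathbf a$ and all permutations $\kappa$.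
   Context: A permutation $\kappa$ of $\{1,\dots,N\}$ acts on $\mathbf s=(s_1,\dots,s_N)$ and $\mathbf a=(a_1,\dots,a_N)$ by permuting coordinates (the same permutation applied to states and actions). A (joint) policy $\nu$ assigns to each joint state $\mathbf s$ a distribution $\nu(\cdot\mid\mathbf s)$ over $\mathcal A^N$; we write $\nu(\mathbf s,\mathbf a)=\nu(\mathbf a\mid \mathbf s)$. The value function is $V^\nu(\mathbf s)=(1-\gamma)\mathbb E\{\sum_{t\ge0}\gamma^t\mathrm r(\mathbf s_t,\mathbf a_t)\mid \mathbf s_0=\mathbf s,\ \mathbf a_t\sim\nu(\cdot\mid\mathbf s_t)\ \forall t\ge 0\}$, and $Q^\nu(\mathbf s,\mathbf a)=\mathbb E_{\mathbf s'\sim\mathbb P(\cdot\mid\mathbf s,\mathbf a)}\{\mathrm r(\mathbf s,\mathbf a)+\gamma V^\nu(\mathbf s')\}$. An optimal policy is one maximizing $V^\nu(\mathbf s)$ for all $\mathbf s$. *)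

theory Defs
  imports "HOL-Analysis.Analysis"
begin

text \<open>Agents are indexed by a finite type 'n (N = CARD('n)); individual states 's and
actions 'a range over finite types. Joint states are 'n \<Rightarrow> 's, joint actions 'n \<Rightarrow> 'a.\<close>

text \<open>Action of a permutation kappa of the agent indices on a joint vector:
the entry of agent i is moved to position kappa i.\<close>
definition permute :: "('n \<Rightarrow> 'n) \<Rightarrow> ('n \<Rightarrow> 'b) \<Rightarrow> ('n \<Rightarrow> 'b)" where
  "permute \<kappa> x = (\<lambda>i. x (inv \<kappa> i))"

definition is_kernel ::
  "(('n::finite \<Rightarrow> 's::finite) \<Rightarrow> ('n \<Rightarrow> 'a::finite) \<Rightarrow> ('n \<Rightarrow> 's) \<Rightarrow> real) \<Rightarrow> bool" where
  "is_kernel P \<longleftrightarrow> (\<forall>s a s'. 0 \<le> P s a s') \<and> (\<forall>s a. (\<Sum>s'\<in>UNIV. P s a s') = 1)"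

text \<open>A (stationary, randomized, joint) policy: nu s a = nu(a | s).\<close>
definition is_policy ::
  "(('n::finite \<Rightarrow> 's::finite) \<Rightarrow> ('n \<Rightarrow> 'a::finite) \<Rightarrow> real) \<Rightarrow> bool" where
  "is_policy \<nu> \<longleftrightarrow> (\<forall>s a. 0 \<le> \<nu> s a) \<and> (\<forall>s. (\<Sum>a\<in>UNIV. \<nu> s a) = 1)"

fun state_dist ::
  "(('n::finite \<Rightarrow> 's::finite) \<Rightarrow> ('n \<Rightarrow> 'a::finite) \<Rightarrow> ('n \<Rightarrow> 's) \<Rightarrow> real) \<Rightarrow>
   (('n \<Rightarrow> 's) \<Rightarrow> ('n \<Rightarrow> 'a) \<Rightarrow> real) \<Rightarrow> ('n \<Rightarrow> 's) \<Rightarrow> nat \<Rightarrow> ('n \<Rightarrow> 's) \<Rightarrow> real" where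
  "state_dist P \<nu> s0 0 s = (if s = s0 then 1 else 0)"
| "state_dist P \<nu> s0 (Suc t) s' =
     (\<Sum>s\<in>UNIV. \<Sum>a\<in>UNIV. state_dist P \<nu> s0 t s * \<nu> s a * P s a s')"

definition expected_reward ::
  "(('n::finite \<Rightarrow> 's::finite) \<Rightarrow> ('n \<Rightarrow> 'a::finite) \<Rightarrow> ('n \<Rightarrow> 's) \<Rightarrow> real) \<Rightarrow>
   (('n \<Rightarrow> 's) \<Rightarrow> ('n \<Rightarrow> 'a) \<Rightarrow> real) \<Rightarrow>
   (('n \<Rightarrow> 's) \<Rightarrow> ('n \<Rightarrow> 'a) \<Rightarrow> real) \<Rightarrow> ('n \<Rightarrow> 's) \<Rightarrow> nat \<Rightarrow> real" where
  "expected_reward P r \<nu> s0 t =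
     (\<Sum>s\<in>UNIV. \<Sum>a\<in>UNIV. state_dist P \<nu> s0 t s * \<nu> s a * r s a)"

text \<open>V^nu(s) = (1-gamma) E[ sum_t gamma^t r(s_t,a_t) ] (expectation exchanged with the
absolutely convergent sum, rewards being bounded on the finite space).\<close>
definition value_fun ::
  "(('n::finite \<Rightarrow> 's::finite) \<Rightarrow> ('n \<Rightarrow> 'a::finite) \<Rightarrow> ('n \<Rightarrow> 's) \<Rightarrow> real) \<Rightarrow>
   (('n \<Rightarrow> 's) \<Rightarrow> ('n \<Rightarrow> 'a) \<Rightarrow> real) \<Rightarrow> real \<Rightarrow>
   (('n \<Rightarrow> 's) \<Rightarrow> ('n \<Rightarrow> 'a) \<Rightarrow> real) \<Rightarrow> ('n \<Rightarrow> 's) \<Rightarrow> real" where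
  "value_fun P r \<gamma> \<nu> s = (1 - \<gamma>) * (\<Sum>t. \<gamma> ^ t * expected_reward P r \<nu> s t)"

definition q_fun ::
  "(('n::finite \<Rightarrow> 's::finite) \<Rightarrow> ('n \<Rightarrow> 'a::finite) \<Rightarrow> ('n \<Rightarrow> 's) \<Rightarrow> real) \<Rightarrow>
   (('n \<Rightarrow> 's) \<Rightarrow> ('n \<Rightarrow> 'a) \<Rightarrow> real) \<Rightarrow> real \<Rightarrow>
   (('n \<Rightarrow> 's) \<Rightarrow> ('n \<Rightarrow> 'a) \<Rightarrow> real) \<Rightarrow> ('n \<Rightarrow> 's) \<Rightarrow> ('n \<Rightarrow> 'a) \<Rightarrow> real" where
  "q_fun P r \<gamma> \<nu> s a = (\<Sum>s'\<in>UNIV. P s a s' * (r s a + \<gamma> * value_fun P r \<gamma> \<nu> s'))"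

definition optimal_policy ::
  "(('n::finite \<Rightarrow> 's::finite) \<Rightarrow> ('n \<Rightarrow> 'a::finite) \<Rightarrow> ('n \<Rightarrow> 's) \<Rightarrow> real) \<Rightarrow>
   (('n \<Rightarrow> 's) \<Rightarrow> ('n \<Rightarrow> 'a) \<Rightarrow> real) \<Rightarrow> real \<Rightarrow>
   (('n \<Rightarrow> 's) \<Rightarrow> ('n \<Rightarrow> 'a) \<Rightarrow> real) \<Rightarrow> bool" where
  "optimal_policy P r \<gamma> \<nu> \<longleftrightarrow> is_policy \<nu> \<and>
     (\<forall>\<mu>. is_policy \<mu> \<longrightarrow> (\<forall>s. value_fun P r \<gamma> \<mu> s \<le> value_fun P r \<gamma> \<nu> s))"

definition perm_invariant_policy ::
  "(('n::finite \<Rightarrow> 's::finite) \<Rightarrow> ('n \<Rightarrow> 'a::finite) \<Rightarrow> real) \<Rightarrow> bool" where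
  "perm_invariant_policy \<nu> \<longleftrightarrow>
     (\<forall>\<kappa> s a. bij \<kappa> \<longrightarrow> \<nu> s a = \<nu> (permute \<kappa> s) (permute \<kappa> a))"

end

theory Submission
  imports Defs
begin

text \<open>
  The value of a policy is the unique fixed point of its Bellman operator, and the optimal value
  is the unique solution of the Bellman optimality equation. Both uniqueness statements follow from
  a discrete maximum principle: a function on a finite set that is bounded above by a
  \<open>\<gamma>\<close>-discounted average of itself is nonpositive. An automorphism of the MDP (bijections of
  joint states and joint actions preserving \<open>r\<close> and \<open>P\<close>) maps solutions of these equations to
  solutions, so by uniqueness the optimal value and the value of every invariant policy are
  invariant. The uniform distribution over the greedy actions of the optimal value is an optimal
  policy, and it is invariant because an automorphism permutes the greedy actions. Permutations of
  the agents act on the MDP by such automorphisms.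
\<close>

lemma ex_arg_max_finite:
  fixes f :: "'x::finite \<Rightarrow> 'b::linorder"
  shows "\<exists>x. \<forall>y. f y \<le> f x"
proof -
  have "Max (range f) \<in> range f"
    by (rule Max_in) auto
  then obtain x where x: "Max (range f) = f x"
    by (rule rangeE)
  have "f y \<le> f x" for y
    unfolding x[symmetric] by simp
  then show ?thesis
    by blast
qed

lemma is_policy_nonneg: "is_policy \<nu> \<Longrightarrow> 0 \<le> \<nu> s a"
  unfolding is_policy_def by auto

lemma is_policy_sum: "is_policy \<nu> \<Longrightarrow> (\<Sum>a\<in>UNIV. \<nu> s a) = 1"
  unfolding is_policy_def by auto

lemma discounted_maximum_principle:
  fixes D :: "'x::finite \<Rightarrow> real"
  assumes "0 \<le> \<gamma>" and "\<gamma> < 1"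
    and average: "\<And>x. \<exists>w. (\<forall>y. 0 \<le> w y) \<and> (\<Sum>y\<in>UNIV. w y) = 1
                          \<and> D x \<le> \<gamma> * (\<Sum>y\<in>UNIV. w y * D y)"
  shows "D x \<le> 0"
proof -
  obtain x\<^sub>0 where max: "\<And>y. D y \<le> D x\<^sub>0"
    using ex_arg_max_finite[of D] by blast
  obtain w where w: "\<forall>y. 0 \<le> w y" "(\<Sum>y\<in>UNIV. w y) = 1"
    and dominated: "D x\<^sub>0 \<le> \<gamma> * (\<Sum>y\<in>UNIV. w y * D y)"
    using average by blast
  have "(\<Sum>y\<in>UNIV. w y * D y) \<le> (\<Sum>y\<in>UNIV. w y * D x\<^sub>0)"
    using w(1) max by (intro sum_mono mult_left_mono) auto
  also have "\<dots> = D x\<^sub>0"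
    using w(2) by (simp add: sum_distrib_right[symmetric])
  finally have "D x\<^sub>0 \<le> \<gamma> * D x\<^sub>0"
    using dominated \<open>0 \<le> \<gamma>\<close> by (meson mult_left_mono order_trans)
  then have "(1 - \<gamma>) * D x\<^sub>0 \<le> 0"
    by (simp add: algebra_simps)
  then have "D x\<^sub>0 \<le> 0"
    using \<open>\<gamma> < 1\<close> by (simp add: mult_le_0_iff)
  then show ?thesis
    using max[of x] by simp
qed

definition deterministic_policy ::
  "(('n::finite \<Rightarrow> 's::finite) \<Rightarrow> ('n \<Rightarrow> 'a::finite)) \<Rightarrow> ('n \<Rightarrow> 's) \<Rightarrow> ('n \<Rightarrow> 'a) \<Rightarrow> real"
  where "deterministic_policy \<pi> s a = (if a = \<pi> s then 1 else 0)"

lemma is_policy_deterministic_policy: "is_policy (deterministic_policy \<pi>)"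
  unfolding is_policy_def deterministic_policy_def by auto

lemma sum_state_dist_0:
  "(\<Sum>x\<in>UNIV. state_dist P \<nu> s 0 x * F x) = (F s :: real)"
  by (simp add: if_distrib[of "\<lambda>c. c * _"] cong: if_cong)

locale finite_mdp =
  fixes P :: "('n::finite \<Rightarrow> 's::finite) \<Rightarrow> ('n \<Rightarrow> 'a::finite) \<Rightarrow> ('n \<Rightarrow> 's) \<Rightarrow> real"
    and r :: "('n \<Rightarrow> 's) \<Rightarrow> ('n \<Rightarrow> 'a) \<Rightarrow> real"
    and \<gamma> :: real
  assumes discount_nonneg: "0 \<le> \<gamma>" and discount_less_one: "\<gamma> < 1"
    and kernel: "is_kernel P"
begin

lemma kernel_nonneg: "0 \<le> P s a s'"
  using kernel unfolding is_kernel_def by auto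

lemma kernel_sum: "(\<Sum>s'\<in>UNIV. P s a s') = 1"
  using kernel unfolding is_kernel_def by auto

definition transition :: "(('n \<Rightarrow> 's) \<Rightarrow> ('n \<Rightarrow> 'a) \<Rightarrow> real) \<Rightarrow> ('n \<Rightarrow> 's) \<Rightarrow> ('n \<Rightarrow> 's) \<Rightarrow> real"
  where "transition \<nu> s s' = (\<Sum>a\<in>UNIV. \<nu> s a * P s a s')"

lemma transition_nonneg: "is_policy \<nu> \<Longrightarrow> 0 \<le> transition \<nu> s s'"
  unfolding transition_def by (auto intro!: sum_nonneg simp: is_policy_nonneg kernel_nonneg)

lemma transition_sum: "is_policy \<nu> \<Longrightarrow> (\<Sum>s'\<in>UNIV. transition \<nu> s s') = 1"
  unfolding transition_def
  by (subst sum.swap) (simp add: sum_distrib_left[symmetric] kernel_sum is_policy_sum)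

lemma state_dist_Suc_last_step:
  "state_dist P \<nu> s\<^sub>0 (Suc t) s = (\<Sum>x\<in>UNIV. state_dist P \<nu> s\<^sub>0 t x * transition \<nu> x s)"
  by (simp only: state_dist.simps(2) transition_def mult.assoc sum_distrib_left)

lemma state_dist_Suc_first_step:
  "state_dist P \<nu> s\<^sub>0 (Suc t) s = (\<Sum>s'\<in>UNIV. transition \<nu> s\<^sub>0 s' * state_dist P \<nu> s' t s)"
proof (induction t arbitrary: s)
  case 0
  show ?case
    by (simp only: state_dist_Suc_last_step sum_state_dist_0)
      (simp add: if_distrib[of "\<lambda>c. _ * c"] cong: if_cong)
next
  case (Suc t)
  have "state_dist P \<nu> s\<^sub>0 (Suc (Suc t)) s =
      (\<Sum>x\<in>UNIV. (\<Sum>s'\<in>UNIV. transition \<nu> s\<^sub>0 s' * state_dist P \<nu> s' t x) * transition \<nu> x s)"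
    by (subst state_dist_Suc_last_step) (simp only: Suc.IH)
  also have "\<dots> = (\<Sum>s'\<in>UNIV. transition \<nu> s\<^sub>0 s' *
      (\<Sum>x\<in>UNIV. state_dist P \<nu> s' t x * transition \<nu> x s))"
    unfolding sum_distrib_left sum_distrib_right mult.assoc by (rule sum.swap)
  also have "\<dots> = (\<Sum>s'\<in>UNIV. transition \<nu> s\<^sub>0 s' * state_dist P \<nu> s' (Suc t) s)"
    by (simp only: state_dist_Suc_last_step)
  finally show ?case .
qed

lemma expected_reward_state_dist:
  "expected_reward P r \<nu> s t =
     (\<Sum>x\<in>UNIV. state_dist P \<nu> s t x * (\<Sum>a\<in>UNIV. \<nu> x a * r x a))"
  by (simp only: expected_reward_def mult.assoc sum_distrib_left)

lemma expected_reward_0: "expected_reward P r \<nu> s 0 = (\<Sum>a\<in>UNIV. \<nu> s a * r s a)"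
  by (simp only: expected_reward_state_dist sum_state_dist_0)

lemma expected_reward_Suc:
  "expected_reward P r \<nu> s (Suc t) = (\<Sum>s'\<in>UNIV. transition \<nu> s s' * expected_reward P r \<nu> s' t)"
proof -
  define \<rho> where "\<rho> x = (\<Sum>a\<in>UNIV. \<nu> x a * r x a)" for x
  have expected_reward: "expected_reward P r \<nu> x t' = (\<Sum>y\<in>UNIV. state_dist P \<nu> x t' y * \<rho> y)"
    for x t'
    unfolding \<rho>_def by (rule expected_reward_state_dist)
  have "expected_reward P r \<nu> s (Suc t) =
      (\<Sum>x\<in>UNIV. (\<Sum>s'\<in>UNIV. transition \<nu> s s' * state_dist P \<nu> s' t x) * \<rho> x)"
    by (simp only: expected_reward state_dist_Suc_first_step)
  also have "\<dots> = (\<Sum>s'\<in>UNIV. transition \<nu> s s' * (\<Sum>x\<in>UNIV. state_dist P \<nu> s' t x * \<rho> x))"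
    unfolding sum_distrib_left sum_distrib_right mult.assoc by (rule sum.swap)
  also have "\<dots> = (\<Sum>s'\<in>UNIV. transition \<nu> s s' * expected_reward P r \<nu> s' t)"
    by (simp only: expected_reward)
  finally show ?thesis .
qed

lemma abs_expected_reward_le:
  assumes \<nu>: "is_policy \<nu>" and R: "\<And>s a. \<bar>r s a\<bar> \<le> R"
  shows "\<bar>expected_reward P r \<nu> s t\<bar> \<le> R"
proof (induction t arbitrary: s)
  case 0
  show ?case
    using convex_sum_bound_le[where I = UNIV and x = "\<nu> s" and a = "r s" and b = 0 and \<delta> = R] \<nu> R
    by (simp add: expected_reward_0 is_policy_nonneg is_policy_sum mult.commute)
next
  case (Suc t)
  show ?case
    using convex_sum_bound_le[where I = UNIV and x = "transition \<nu> s"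
        and a = "\<lambda>s'. expected_reward P r \<nu> s' t" and b = 0 and \<delta> = R] \<nu> Suc.IH
    by (simp add: expected_reward_Suc transition_nonneg transition_sum mult.commute)
qed

lemma summable_discounted_reward:
  assumes "is_policy \<nu>"
  shows "summable (\<lambda>t. \<gamma> ^ t * expected_reward P r \<nu> s t)"
proof -
  obtain R where R: "\<And>s a. \<bar>r s a\<bar> \<le> R"
    using ex_arg_max_finite[of "\<lambda>(s, a). \<bar>r s a\<bar>"] by auto
  show ?thesis
  proof (rule summable_comparison_test')
    show "summable (\<lambda>t. \<gamma> ^ t * R)"
      using discount_nonneg discount_less_one by (intro summable_mult2 summable_geometric) simp
    show "norm (\<gamma> ^ t * expected_reward P r \<nu> s t) \<le> \<gamma> ^ t * R" for t
      using abs_expected_reward_le[OF assms R] discount_nonneg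
      by (simp add: abs_mult mult_left_mono)
  qed
qed

lemma discounted_reward_first_step:
  assumes \<nu>: "is_policy \<nu>"
  shows "(\<Sum>t. \<gamma> ^ t * expected_reward P r \<nu> s t) = expected_reward P r \<nu> s 0
           + \<gamma> * (\<Sum>s'\<in>UNIV. transition \<nu> s s' * (\<Sum>t. \<gamma> ^ t * expected_reward P r \<nu> s' t))"
proof -
  let ?f = "\<lambda>s t. \<gamma> ^ t * expected_reward P r \<nu> s t"
  have summable: "summable (?f x)" for x
    using summable_discounted_reward[OF \<nu>] .
  have "(\<Sum>t. ?f s t) = ?f s 0 + (\<Sum>t. ?f s (Suc t))"
    using suminf_split_head[OF summable] by simp
  also have "(\<Sum>t. ?f s (Suc t)) = (\<Sum>t. \<gamma> * (\<Sum>s'\<in>UNIV. transition \<nu> s s' * ?f s' t))"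
    by (simp add: expected_reward_Suc sum_distrib_left mult_ac)
  also have "\<dots> = \<gamma> * (\<Sum>s'\<in>UNIV. transition \<nu> s s' * (\<Sum>t. ?f s' t))"
    using summable
    by (simp add: suminf_mult suminf_sum summable_mult summable_sum)
  finally show ?thesis by simp
qed

text \<open>Value functions are normalised by the factor \<open>1 - \<gamma>\<close>, so the Bellman backup weighs the
  immediate reward by \<open>1 - \<gamma>\<close> as well.\<close>

definition q_backup :: "(('n \<Rightarrow> 's) \<Rightarrow> real) \<Rightarrow> ('n \<Rightarrow> 's) \<Rightarrow> ('n \<Rightarrow> 'a) \<Rightarrow> real"
  where "q_backup W s a = (1 - \<gamma>) * r s a + \<gamma> * (\<Sum>s'\<in>UNIV. P s a s' * W s')"

definition bellman_op ::
  "(('n \<Rightarrow> 's) \<Rightarrow> ('n \<Rightarrow> 'a) \<Rightarrow> real) \<Rightarrow> (('n \<Rightarrow> 's) \<Rightarrow> real) \<Rightarrow> ('n \<Rightarrow> 's) \<Rightarrow> real"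
  where "bellman_op \<nu> W s = (\<Sum>a\<in>UNIV. \<nu> s a * q_backup W s a)"

lemma bellman_op_eq_transition:
  "bellman_op \<nu> W s =
     (1 - \<gamma>) * (\<Sum>a\<in>UNIV. \<nu> s a * r s a) + \<gamma> * (\<Sum>s'\<in>UNIV. transition \<nu> s s' * W s')"
proof -
  have "(\<Sum>a\<in>UNIV. \<nu> s a * (\<Sum>s'\<in>UNIV. P s a s' * W s')) = (\<Sum>s'\<in>UNIV. transition \<nu> s s' * W s')"
    unfolding transition_def sum_distrib_left sum_distrib_right
    by (subst sum.swap) (simp add: mult_ac)
  then show ?thesis
    unfolding bellman_op_def q_backup_def
    by (simp add: distrib_left sum.distrib sum_distrib_left[symmetric] mult_ac)
qed

lemma bellman_op_value_fun:
  assumes "is_policy \<nu>"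
  shows "bellman_op \<nu> (value_fun P r \<gamma> \<nu>) s = value_fun P r \<gamma> \<nu> s"
  unfolding bellman_op_eq_transition value_fun_def discounted_reward_first_step[OF assms, of s]
    expected_reward_0
  by (simp add: algebra_simps sum_distrib_left)

lemma bellman_op_diff:
  "bellman_op \<nu> W\<^sub>1 s - bellman_op \<nu> W\<^sub>2 s = \<gamma> * (\<Sum>s'\<in>UNIV. transition \<nu> s s' * (W\<^sub>1 s' - W\<^sub>2 s'))"
  unfolding bellman_op_eq_transition by (simp add: algebra_simps sum_subtractf)

lemma q_backup_diff:
  "q_backup W\<^sub>1 s a - q_backup W\<^sub>2 s a = \<gamma> * (\<Sum>s'\<in>UNIV. P s a s' * (W\<^sub>1 s' - W\<^sub>2 s'))"
  unfolding q_backup_def by (simp add: algebra_simps sum_subtractf)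

lemma policy_maximum_principle:
  assumes \<nu>: "is_policy \<nu>" and "\<And>s. D s \<le> \<gamma> * (\<Sum>s'\<in>UNIV. transition \<nu> s s' * D s')"
  shows "D s \<le> 0"
  using discount_nonneg discount_less_one
proof (rule discounted_maximum_principle[where D = D])
  show "\<exists>w. (\<forall>s'. 0 \<le> w s') \<and> (\<Sum>s'\<in>UNIV. w s') = 1 \<and> D x \<le> \<gamma> * (\<Sum>s'\<in>UNIV. w s' * D s')" for x
    using assms transition_nonneg[OF \<nu>] transition_sum[OF \<nu>] by blast
qed

lemma action_maximum_principle:
  assumes "\<And>s. \<exists>a. D s \<le> \<gamma> * (\<Sum>s'\<in>UNIV. P s a s' * D s')"
  shows "D s \<le> 0"
  using discount_nonneg discount_less_one
proof (rule discounted_maximum_principle[where D = D])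
  show "\<exists>w. (\<forall>s'. 0 \<le> w s') \<and> (\<Sum>s'\<in>UNIV. w s') = 1 \<and> D x \<le> \<gamma> * (\<Sum>s'\<in>UNIV. w s' * D s')" for x
    using assms kernel_nonneg kernel_sum by blast
qed

lemma bellman_op_comparison:
  assumes "is_policy \<nu>" and "\<And>s. W\<^sub>1 s - W\<^sub>2 s \<le> bellman_op \<nu> W\<^sub>1 s - bellman_op \<nu> W\<^sub>2 s"
  shows "W\<^sub>1 s \<le> W\<^sub>2 s"
  using policy_maximum_principle[OF assms(1), of "\<lambda>s. W\<^sub>1 s - W\<^sub>2 s"] assms(2)
  by (simp add: bellman_op_diff)

lemma le_value_fun_if_le_bellman_op:
  assumes \<nu>: "is_policy \<nu>" and "\<And>s. W s \<le> bellman_op \<nu> W s"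
  shows "W s \<le> value_fun P r \<gamma> \<nu> s"
  using \<nu> by (rule bellman_op_comparison) (use assms(2) bellman_op_value_fun[OF \<nu>] in simp)

lemma value_fun_le_if_bellman_op_le:
  assumes \<nu>: "is_policy \<nu>" and "\<And>s. bellman_op \<nu> W s \<le> W s"
  shows "value_fun P r \<gamma> \<nu> s \<le> W s"
  using \<nu> by (rule bellman_op_comparison) (use assms(2) bellman_op_value_fun[OF \<nu>] in simp)

lemma value_fun_unique_fixpoint:
  assumes "is_policy \<nu>" and "\<And>s. bellman_op \<nu> W s = W s"
  shows "value_fun P r \<gamma> \<nu> = W"
  using le_value_fun_if_le_bellman_op[OF assms(1)] value_fun_le_if_bellman_op_le[OF assms(1)]
    assms(2)
  by (simp add: order_antisym fun_eq_iff)

lemma bellman_op_deterministic_policy: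
  "bellman_op (deterministic_policy \<pi>) W s = q_backup W s (\<pi> s)"
  by (simp add: bellman_op_def deterministic_policy_def if_distrib[of "\<lambda>c. c * _"] cong: if_cong)

definition bellman_optimal :: "(('n \<Rightarrow> 's) \<Rightarrow> real) \<Rightarrow> bool"
  where "bellman_optimal W \<longleftrightarrow> (\<forall>s a. q_backup W s a \<le> W s) \<and> (\<forall>s. \<exists>a. q_backup W s a = W s)"

lemma bellman_optimal_unique:
  assumes "bellman_optimal W\<^sub>1" and "bellman_optimal W\<^sub>2"
  shows "W\<^sub>1 = W\<^sub>2"
proof -
  have le: "V\<^sub>1 s \<le> V\<^sub>2 s" if V\<^sub>1: "bellman_optimal V\<^sub>1" and V\<^sub>2: "bellman_optimal V\<^sub>2"
    for V\<^sub>1 V\<^sub>2 s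
  proof -
    have "V\<^sub>1 s - V\<^sub>2 s \<le> 0"
    proof (rule action_maximum_principle)
      fix x
      obtain a where "q_backup V\<^sub>1 x a = V\<^sub>1 x" "q_backup V\<^sub>2 x a \<le> V\<^sub>2 x"
        using V\<^sub>1 V\<^sub>2 unfolding bellman_optimal_def by blast
      then show "\<exists>a. V\<^sub>1 x - V\<^sub>2 x \<le> \<gamma> * (\<Sum>s'\<in>UNIV. P x a s' * (V\<^sub>1 s' - V\<^sub>2 s'))"
        using q_backup_diff[of V\<^sub>1 x a V\<^sub>2] by (intro exI[of _ a]) simp
    qed
    then show ?thesis by simp
  qed
  show ?thesis
    using le[OF assms] le[OF assms(2,1)] by (simp add: order_antisym fun_eq_iff)
qed

lemma value_fun_le_bellman_optimal:
  assumes W: "bellman_optimal W" and \<mu>: "is_policy \<mu>"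
  shows "value_fun P r \<gamma> \<mu> s \<le> W s"
proof (rule value_fun_le_if_bellman_op_le[OF \<mu>])
  fix x
  have "bellman_op \<mu> W x \<le> (\<Sum>a\<in>UNIV. \<mu> x a * W x)"
    unfolding bellman_op_def using W \<mu>
    by (intro sum_mono mult_left_mono) (auto simp: bellman_optimal_def is_policy_nonneg)
  also have "\<dots> = W x"
    using is_policy_sum[OF \<mu>] by (simp add: sum_distrib_right[symmetric])
  finally show "bellman_op \<mu> W x \<le> W x" .
qed

lemma policy_improvement:
  fixes \<pi> :: "('n \<Rightarrow> 's) \<Rightarrow> ('n \<Rightarrow> 'a)" and s\<^sub>0 :: "'n \<Rightarrow> 's" and a\<^sub>0 :: "'n \<Rightarrow> 'a"
  defines "W \<equiv> value_fun P r \<gamma> (deterministic_policy \<pi>)"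
    and "W' \<equiv> value_fun P r \<gamma> (deterministic_policy (\<pi>(s\<^sub>0 := a\<^sub>0)))"
  assumes better: "W s\<^sub>0 < q_backup W s\<^sub>0 a\<^sub>0"
  shows "W s \<le> W' s" and "W s\<^sub>0 < W' s\<^sub>0"
proof -
  have W_fix: "q_backup W x (\<pi> x) = W x" for x
    using bellman_op_value_fun[OF is_policy_deterministic_policy, of \<pi> x]
    by (simp add: W_def bellman_op_deterministic_policy)
  have "W x \<le> bellman_op (deterministic_policy (\<pi>(s\<^sub>0 := a\<^sub>0))) W x" for x
    using better W_fix[of x] by (simp add: bellman_op_deterministic_policy)
  then have le: "W x \<le> W' x" for x
    unfolding W'_def by (rule le_value_fun_if_le_bellman_op[OF is_policy_deterministic_policy])
  then show "W s \<le> W' s" .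
  have "0 \<le> \<gamma> * (\<Sum>s'\<in>UNIV. P s\<^sub>0 a\<^sub>0 s' * (W' s' - W s'))"
    using le discount_nonneg by (intro mult_nonneg_nonneg sum_nonneg) (auto simp: kernel_nonneg)
  then have "q_backup W s\<^sub>0 a\<^sub>0 \<le> q_backup W' s\<^sub>0 a\<^sub>0"
    using q_backup_diff[of W' s\<^sub>0 a\<^sub>0 W] by simp
  also have "q_backup W' s\<^sub>0 a\<^sub>0 = W' s\<^sub>0"
    using bellman_op_value_fun[OF is_policy_deterministic_policy, of "\<pi>(s\<^sub>0 := a\<^sub>0)" s\<^sub>0]
    by (simp add: W'_def bellman_op_deterministic_policy)
  finally show "W s\<^sub>0 < W' s\<^sub>0"
    using better by simp
qed

text \<open>The witness is the value of a deterministic policy whose values, summed over all states,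
  are maximal among the finitely many deterministic policies: by policy improvement no single
  action can beat it.\<close>

lemma bellman_optimal_exists: "\<exists>W. bellman_optimal W"
proof -
  define total where "total \<pi> = (\<Sum>s\<in>UNIV. value_fun P r \<gamma> (deterministic_policy \<pi>) s)" for \<pi>
  obtain \<pi> where max: "\<And>\<pi>'. total \<pi>' \<le> total \<pi>"
    using ex_arg_max_finite[of total] by blast
  define W where "W = value_fun P r \<gamma> (deterministic_policy \<pi>)"
  have "q_backup W s a \<le> W s" for s a
  proof (rule ccontr)
    assume "\<not> q_backup W s a \<le> W s"
    then have "W x \<le> value_fun P r \<gamma> (deterministic_policy (\<pi>(s := a))) x"
      and "W s < value_fun P r \<gamma> (deterministic_policy (\<pi>(s := a))) s" for x
      using policy_improvement[of \<pi> s a] by (simp_all add: W_def)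
    then have "total \<pi> < total (\<pi>(s := a))"
      unfolding total_def W_def[symmetric] by (intro sum_strict_mono_ex1) auto
    then show False
      using max[of "\<pi>(s := a)"] by simp
  qed
  moreover have "q_backup W s (\<pi> s) = W s" for s
    using bellman_op_value_fun[OF is_policy_deterministic_policy, of \<pi> s]
    by (simp add: W_def bellman_op_deterministic_policy)
  ultimately have "bellman_optimal W"
    unfolding bellman_optimal_def by blast
  then show ?thesis
    by blast
qed

definition optimal_actions :: "(('n \<Rightarrow> 's) \<Rightarrow> real) \<Rightarrow> ('n \<Rightarrow> 's) \<Rightarrow> ('n \<Rightarrow> 'a) set"
  where "optimal_actions W s = {a. q_backup W s a = W s}"

definition greedy_policy :: "(('n \<Rightarrow> 's) \<Rightarrow> real) \<Rightarrow> ('n \<Rightarrow> 's) \<Rightarrow> ('n \<Rightarrow> 'a) \<Rightarrow> real"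
  where "greedy_policy W s a =
    (if a \<in> optimal_actions W s then 1 / real (card (optimal_actions W s)) else 0)"

lemma greedy_policy_weighted_sum:
  "(\<Sum>a\<in>UNIV. greedy_policy W s a * f a) =
     (\<Sum>a\<in>optimal_actions W s. f a) / real (card (optimal_actions W s))"
  by (simp add: greedy_policy_def if_distrib[of "\<lambda>c. c * _"] sum.If_cases sum_divide_distrib
      cong: if_cong)

lemma card_optimal_actions_pos: "bellman_optimal W \<Longrightarrow> 0 < card (optimal_actions W s)"
  unfolding bellman_optimal_def optimal_actions_def by (auto simp: card_gt_0_iff)

lemma is_policy_greedy_policy:
  assumes "bellman_optimal W"
  shows "is_policy (greedy_policy W)"
  unfolding is_policy_def
proof (intro conjI allI)
  show "0 \<le> greedy_policy W s a" for s a
    by (simp add: greedy_policy_def)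
  show "(\<Sum>a\<in>UNIV. greedy_policy W s a) = 1" for s
    using greedy_policy_weighted_sum[of W s "\<lambda>_. 1"] card_optimal_actions_pos[OF assms, of s]
    by (simp add: card_gt_0_iff)
qed

lemma bellman_op_greedy_policy:
  assumes "bellman_optimal W"
  shows "bellman_op (greedy_policy W) W s = W s"
proof -
  have "(\<Sum>a\<in>optimal_actions W s. q_backup W s a) = (\<Sum>a\<in>optimal_actions W s. W s)"
    by (rule sum.cong) (auto simp: optimal_actions_def)
  then show ?thesis
    using card_optimal_actions_pos[OF assms, of s]
    by (simp add: bellman_op_def greedy_policy_weighted_sum card_gt_0_iff)
qed

lemma optimal_policy_greedy_policy:
  assumes W: "bellman_optimal W"
  shows "optimal_policy P r \<gamma> (greedy_policy W)"
proof -
  have "value_fun P r \<gamma> (greedy_policy W) = W"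
    using is_policy_greedy_policy[OF W] bellman_op_greedy_policy[OF W]
    by (rule value_fun_unique_fixpoint)
  then show ?thesis
    unfolding optimal_policy_def
    using is_policy_greedy_policy[OF W] value_fun_le_bellman_optimal[OF W] by simp
qed

end

locale mdp_automorphism = finite_mdp P r \<gamma>
  for P :: "('n::finite \<Rightarrow> 's::finite) \<Rightarrow> ('n \<Rightarrow> 'a::finite) \<Rightarrow> ('n \<Rightarrow> 's) \<Rightarrow> real"
    and r :: "('n \<Rightarrow> 's) \<Rightarrow> ('n \<Rightarrow> 'a) \<Rightarrow> real"
    and \<gamma> :: real +
  fixes g :: "('n \<Rightarrow> 's) \<Rightarrow> ('n \<Rightarrow> 's)"
    and h :: "('n \<Rightarrow> 'a) \<Rightarrow> ('n \<Rightarrow> 'a)"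
  assumes bij_g: "bij g" and bij_h: "bij h"
    and reward_invariant: "r (g s) (h a) = r s a"
    and kernel_invariant: "P (g s) (h a) (g s') = P s a s'"
begin

lemma q_backup_automorphism: "q_backup W (g s) (h a) = q_backup (W \<circ> g) s a"
proof -
  have "(\<Sum>s'\<in>UNIV. P (g s) (h a) s' * W s') = (\<Sum>s'\<in>UNIV. P (g s) (h a) (g s') * W (g s'))"
    using sum.reindex_bij_betw[OF bij_g, of "\<lambda>s'. P (g s) (h a) s' * W s'"] by simp
  then show ?thesis
    by (simp add: q_backup_def reward_invariant kernel_invariant)
qed

lemma bellman_optimal_compose:
  assumes W: "bellman_optimal W"
  shows "bellman_optimal (W \<circ> g)"
  unfolding bellman_optimal_def
proof (intro conjI allI)
  show "q_backup (W \<circ> g) s a \<le> (W \<circ> g) s" for s a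
    using W unfolding bellman_optimal_def q_backup_automorphism[symmetric] by simp
  show "\<exists>a. q_backup (W \<circ> g) s a = (W \<circ> g) s" for s
  proof -
    obtain a where "q_backup W (g s) a = W (g s)"
      using W unfolding bellman_optimal_def by blast
    then have "q_backup (W \<circ> g) s (inv h a) = (W \<circ> g) s"
      using q_backup_automorphism[of W s "inv h a"] surj_f_inv_f[OF bij_is_surj[OF bij_h]]
      by simp
    then show ?thesis
      by blast
  qed
qed

lemma bellman_optimal_invariant:
  assumes "bellman_optimal W"
  shows "W (g s) = W s"
proof -
  have "W \<circ> g = W"
    using bellman_optimal_compose[OF assms] assms by (rule bellman_optimal_unique)
  from fun_cong[OF this, of s] show ?thesis
    by simp
qed

lemma optimal_actions_automorphism:
  assumes "bellman_optimal W"
  shows "optimal_actions W (g s) = h ` optimal_actions W s"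
proof -
  have "optimal_actions W (g s) = h ` (h -` optimal_actions W (g s))"
    using bij_h by (simp add: bij_is_surj surj_image_vimage_eq)
  also have "h -` optimal_actions W (g s) = optimal_actions W s"
    using bellman_optimal_invariant[OF assms] q_backup_automorphism[of W s]
    by (simp add: optimal_actions_def comp_def)
  finally show ?thesis .
qed

lemma greedy_policy_invariant:
  assumes "bellman_optimal W"
  shows "greedy_policy W (g s) (h a) = greedy_policy W s a"
  using optimal_actions_automorphism[OF assms] bij_is_inj[OF bij_h]
    card_image[OF inj_on_subset[OF bij_is_inj[OF bij_h] subset_UNIV]]
  by (simp add: greedy_policy_def inj_image_mem_iff)

lemma bellman_op_automorphism:
  assumes invariant: "\<And>s a. \<nu> (g s) (h a) = \<nu> s a"
  shows "bellman_op \<nu> W (g s) = bellman_op \<nu> (W \<circ> g) s"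
proof -
  have "bellman_op \<nu> W (g s) = (\<Sum>a\<in>UNIV. \<nu> (g s) (h a) * q_backup W (g s) (h a))"
    unfolding bellman_op_def
    using sum.reindex_bij_betw[OF bij_h, of "\<lambda>a. \<nu> (g s) a * q_backup W (g s) a"] by simp
  then show ?thesis
    by (simp add: bellman_op_def invariant q_backup_automorphism)
qed

lemma value_fun_invariant:
  assumes policy: "is_policy \<nu>" and invariant: "\<And>s a. \<nu> (g s) (h a) = \<nu> s a"
  shows "value_fun P r \<gamma> \<nu> (g s) = value_fun P r \<gamma> \<nu> s"
proof -
  let ?V = "value_fun P r \<gamma> \<nu>"
  have "bellman_op \<nu> (?V \<circ> g) x = (?V \<circ> g) x" for x
    using bellman_op_automorphism[where \<nu> = \<nu>, OF invariant, of ?V x]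
      bellman_op_value_fun[OF policy, of "g x"]
    by simp
  then have "?V = ?V \<circ> g"
    by (rule value_fun_unique_fixpoint[OF policy])
  from fun_cong[OF this, of s] show ?thesis
    by simp
qed

lemma q_fun_invariant:
  assumes "is_policy \<nu>" and "\<And>s a. \<nu> (g s) (h a) = \<nu> s a"
  shows "q_fun P r \<gamma> \<nu> (g s) (h a) = q_fun P r \<gamma> \<nu> s a"
proof -
  have V: "value_fun P r \<gamma> \<nu> (g x) = value_fun P r \<gamma> \<nu> x" for x
    using assms by (rule value_fun_invariant)
  let ?f = "\<lambda>s'. P (g s) (h a) s' * (r (g s) (h a) + \<gamma> * value_fun P r \<gamma> \<nu> s')"
  have "q_fun P r \<gamma> \<nu> (g s) (h a) = (\<Sum>s'\<in>UNIV. ?f (g s'))"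
    using sum.reindex_bij_betw[OF bij_g, of ?f] by (simp add: q_fun_def)
  also have "\<dots> = q_fun P r \<gamma> \<nu> s a"
    by (simp add: q_fun_def reward_invariant kernel_invariant V)
  finally show ?thesis .
qed

end

lemma permute_permute_inv: "bij \<kappa> \<Longrightarrow> permute \<kappa> (permute (inv \<kappa>) x) = x"
  unfolding permute_def by (simp add: inv_inv_eq bij_is_surj surj_f_inv_f)

lemma permute_inv_permute: "bij \<kappa> \<Longrightarrow> permute (inv \<kappa>) (permute \<kappa> x) = x"
  unfolding permute_def by (simp add: inv_inv_eq bij_is_inj inv_f_f)

lemma bij_permute: "bij \<kappa> \<Longrightarrow> bij (permute \<kappa>)"
  by (rule o_bij[of "permute (inv \<kappa>)"]) (auto simp: permute_permute_inv permute_inv_permute)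

locale agent_symmetric_mdp = finite_mdp P r \<gamma>
  for P :: "('n::finite \<Rightarrow> 's::finite) \<Rightarrow> ('n \<Rightarrow> 'a::finite) \<Rightarrow> ('n \<Rightarrow> 's) \<Rightarrow> real"
    and r :: "('n \<Rightarrow> 's) \<Rightarrow> ('n \<Rightarrow> 'a) \<Rightarrow> real"
    and \<gamma> :: real +
  assumes reward_permute: "bij \<kappa> \<Longrightarrow> r s a = r (permute \<kappa> s) (permute \<kappa> a)"
    and kernel_permute: "bij \<kappa> \<Longrightarrow> P s a s' = P (permute \<kappa> s) (permute \<kappa> a) (permute \<kappa> s')"
begin

lemma mdp_automorphism_permute: "bij \<kappa> \<Longrightarrow> mdp_automorphism P r \<gamma> (permute \<kappa>) (permute \<kappa>)"
  by unfold_locales (simp_all add: bij_permute reward_permute[symmetric] kernel_permute[symmetric])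

lemma perm_invariant_greedy_policy:
  assumes W: "bellman_optimal W"
  shows "perm_invariant_policy (greedy_policy W)"
  unfolding perm_invariant_policy_def
proof (intro allI impI)
  fix \<kappa> :: "'n \<Rightarrow> 'n" and s a
  assume "bij \<kappa>"
  then interpret mdp_automorphism P r \<gamma> "permute \<kappa>" "permute \<kappa>"
    by (rule mdp_automorphism_permute)
  show "greedy_policy W s a = greedy_policy W (permute \<kappa> s) (permute \<kappa> a)"
    using greedy_policy_invariant[OF W] by simp
qed

lemma ex_optimal_perm_invariant_policy: "\<exists>\<nu>. optimal_policy P r \<gamma> \<nu> \<and> perm_invariant_policy \<nu>"
proof -
  obtain W where "bellman_optimal W"
    using bellman_optimal_exists ..
  then show ?thesis
    using optimal_policy_greedy_policy perm_invariant_greedy_policy by blast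
qed

lemma perm_invariant_value_fun_q_fun:
  assumes \<nu>: "is_policy \<nu>" and invariant: "perm_invariant_policy \<nu>" and "bij \<kappa>"
  shows "value_fun P r \<gamma> \<nu> s = value_fun P r \<gamma> \<nu> (permute \<kappa> s)"
    and "q_fun P r \<gamma> \<nu> s a = q_fun P r \<gamma> \<nu> (permute \<kappa> s) (permute \<kappa> a)"
proof -
  interpret mdp_automorphism P r \<gamma> "permute \<kappa>" "permute \<kappa>"
    using \<open>bij \<kappa>\<close> by (rule mdp_automorphism_permute)
  have "\<nu> (permute \<kappa> x) (permute \<kappa> b) = \<nu> x b" for x b
    using invariant \<open>bij \<kappa>\<close> unfolding perm_invariant_policy_def by metis
  then show "value_fun P r \<gamma> \<nu> s = value_fun P r \<gamma> \<nu> (permute \<kappa> s)"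
    and "q_fun P r \<gamma> \<nu> s a = q_fun P r \<gamma> \<nu> (permute \<kappa> s) (permute \<kappa> a)"
    using value_fun_invariant[OF \<nu>] q_fun_invariant[OF \<nu>] by simp_all
qed

end

theorem proposition1:
  fixes P :: "('n::finite \<Rightarrow> 's::finite) \<Rightarrow> ('n \<Rightarrow> 'a::finite) \<Rightarrow> ('n \<Rightarrow> 's) \<Rightarrow> real"
    and r :: "('n \<Rightarrow> 's) \<Rightarrow> ('n \<Rightarrow> 'a) \<Rightarrow> real"
    and \<gamma> :: real
  assumes "0 < \<gamma>" and "\<gamma> < 1"
    and "is_kernel P"
    and r_inv: "\<And>\<kappa> s a. bij \<kappa> \<Longrightarrow> r s a = r (permute \<kappa> s) (permute \<kappa> a)"
    and P_inv: "\<And>\<kappa> s a s'. bij \<kappa> \<Longrightarrow>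
                  P s a s' = P (permute \<kappa> s) (permute \<kappa> a) (permute \<kappa> s')"
  shows "(\<exists>\<nu>. optimal_policy P r \<gamma> \<nu> \<and> perm_invariant_policy \<nu>)
       \<and> (\<forall>\<nu>. is_policy \<nu> \<and> perm_invariant_policy \<nu> \<longrightarrow>
            (\<forall>\<kappa> s a. bij \<kappa> \<longrightarrow>
               value_fun P r \<gamma> \<nu> s = value_fun P r \<gamma> \<nu> (permute \<kappa> s)
             \<and> q_fun P r \<gamma> \<nu> s a = q_fun P r \<gamma> \<nu> (permute \<kappa> s) (permute \<kappa> a)))"
proof -
  interpret agent_symmetric_mdp P r \<gamma>
  proof unfold_locales
    show "0 \<le> \<gamma>"
      using \<open>0 < \<gamma>\<close> by simp
  qed (fact assms r_inv P_inv)+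
  show ?thesis
    using ex_optimal_perm_invariant_policy perm_invariant_value_fun_q_fun by blast
qed

end
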